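(* Let $G=\langle a,b\mid aba^{-1}=b^{-1}\rangle$ (the fundamental group of the Klein bottle). For $d\geq1$ put $$a_d=\begin{cases}1 & d\text{ odd},\\ \frac{d+6}{4} & d\equiv 2 \pmod 4,\\ \frac{d+4}{4} & d\equiv 0\pmod 4.\end{cases}$$ Then for every $n\geq1$ the number of conjugacy classes of subgroups of index $n$ in $G$ equals $\sum_{d\mid n}a_d$. *)

theory Defs
  imports "HOL-Algebra.Coset"
begin

text \<open>Concrete model of G = <a,b | a b a^-1 = b^-1>: the pair (k, m) stands for b^k a^m.
  Multiplication: (b^k a^m)(b^l a^n) = b^(k + (-1)^m l) a^(m+n).\<close>

definition klein_group :: "(int \<times> int) monoid" where
  "klein_group = \<lparr> carrier = UNIV,
     mult = (\<lambda>(k, m) (l, n). (k + (if even m then l else - l), m + n)),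
     one = (0, 0) \<rparr>"

definition klein_a :: "int \<times> int" where "klein_a = (0, 1)"
definition klein_b :: "int \<times> int" where "klein_b = (1, 0)"

definition subgroups_of_index :: "('g, 'c) monoid_scheme \<Rightarrow> nat \<Rightarrow> 'g set set" where
  "subgroups_of_index G n = {H. subgroup H G \<and> card (RCOSETS G H) = n}"

definition conjugate_subgroups :: "('g, 'c) monoid_scheme \<Rightarrow> 'g set \<Rightarrow> 'g set \<Rightarrow> bool" where
  "conjugate_subgroups G H K \<longleftrightarrow>
     (\<exists>g \<in> carrier G. K = (\<lambda>h. g \<otimes>\<^bsub>G\<^esub> h \<otimes>\<^bsub>G\<^esub> inv\<^bsub>G\<^esub> g) ` H)"

definition num_conj_classes_index :: "('g, 'c) monoid_scheme \<Rightarrow> nat \<Rightarrow> nat" where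
  "num_conj_classes_index G n =
     card (subgroups_of_index G n // {(H, K). conjugate_subgroups G H K})"

definition klein_a_seq :: "nat \<Rightarrow> nat" where
  "klein_a_seq d = (if odd d then 1
                    else if d mod 4 = 2 then (d + 6) div 4
                    else (d + 4) div 4)"

end

theory Submission
  imports Defs "HOL-Algebra.Generated_Groups"
begin

text \<open>Write the elements of G as b^k a^m. A subgroup H of finite index meets the subgroup
  generated by b in the multiples of some b^r, its a-exponents are the multiples of some s, and it
  contains some b^t a^s; then H is generated by b^r and b^t a^s, its index is rs, and only t modulo r
  matters. Conjugation by b^p a^q fixes r and s and replaces t by \<open>\<plusminus>t\<close> if s is even and by
  \<open>\<plusminus>t + 2p\<close> if s is odd. Hence for n = rs there are r div 2 + 1 classes if s is even and
  gcd(2, r) classes if s is odd. Summing over r | n and comparing with the sum of the a_d by the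
  substitution d = 2r and the involution r \<mapsto> n/r of the divisors of n gives the formula.\<close>

lemma subgroup_mult_inv_closed:
  "subgroup H G \<Longrightarrow> x \<in> H \<Longrightarrow> y \<in> H \<Longrightarrow> x \<otimes>\<^bsub>G\<^esub> inv\<^bsub>G\<^esub> y \<in> H"
  by (simp add: subgroup.m_closed subgroup.m_inv_closed)

lemma (in group) rcos_eq_iff:
  assumes "subgroup H G" "x \<in> carrier G" "y \<in> carrier G"
  shows "H #> x = H #> y \<longleftrightarrow> x \<otimes> inv y \<in> H"
proof -
  have "x \<in> H #> y \<longleftrightarrow> x \<otimes> inv y \<in> H"
    by (rule subgroup.rcos_module[OF assms(1) is_group assms(3,2)])
  moreover have "H #> x = H #> y \<longleftrightarrow> x \<in> H #> y"
    using rcos_self[OF assms(2,1)] repr_independence[OF _ assms(3,1)] by auto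
  ultimately show ?thesis by simp
qed

lemma (in group) finite_rcosets_pigeonhole:
  fixes f :: "int \<Rightarrow> 'a"
  assumes "subgroup H G" "finite (rcosets H)" "\<And>i. f i \<in> carrier G"
  shows "\<exists>i j. i \<noteq> j \<and> f i \<otimes> inv (f j) \<in> H"
proof (rule ccontr)
  assume "\<not> ?thesis"
  then have "inj (\<lambda>i. H #> f i)"
    using rcos_eq_iff[OF assms(1) assms(3) assms(3)] by (auto intro!: injI)
  moreover have "range (\<lambda>i. H #> f i) \<subseteq> rcosets H"
    unfolding RCOSETS_def using assms(3) by auto
  ultimately have "finite (UNIV :: int set)"
    using assms(2) by (meson finite_imageD finite_subset)
  then show False by simp
qed

lemma (in group) card_rcosets_eq_card_transversal:
  assumes H: "subgroup H G" and B: "B \<subseteq> carrier G"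
    and covers: "\<And>y. y \<in> carrier G \<Longrightarrow> \<exists>x\<in>B. y \<otimes> inv x \<in> H"
    and separates: "\<And>x x'. x \<in> B \<Longrightarrow> x' \<in> B \<Longrightarrow> x \<otimes> inv x' \<in> H \<Longrightarrow> x = x'"
  shows "card (rcosets H) = card B"
proof -
  have "inj_on (\<lambda>x. H #> x) B"
  proof (rule inj_onI)
    fix x x' assume "x \<in> B" "x' \<in> B" "H #> x = H #> x'"
    then show "x = x'"
      using separates rcos_eq_iff[OF H] B by blast
  qed
  moreover have "(\<lambda>x. H #> x) ` B = rcosets H"
  proof
    show "(\<lambda>x. H #> x) ` B \<subseteq> rcosets H"
      using B unfolding RCOSETS_def by auto
    show "rcosets H \<subseteq> (\<lambda>x. H #> x) ` B"
    proof
      fix C assume "C \<in> rcosets H"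
      then obtain y where y: "y \<in> carrier G" "C = H #> y"
        unfolding RCOSETS_def by auto
      then obtain x where "x \<in> B" "y \<otimes> inv x \<in> H"
        using covers by blast
      then show "C \<in> (\<lambda>x. H #> x) ` B"
        using y rcos_eq_iff[OF H] B by blast
    qed
  qed
  ultimately show ?thesis
    using card_image by fastforce
qed

lemma diff_closed_int_set_mult_mem:
  fixes S :: "int set"
  assumes diff_closed: "\<And>a b. a \<in> S \<Longrightarrow> b \<in> S \<Longrightarrow> a - b \<in> S" and "a \<in> S"
  shows "a * c \<in> S"
proof (induction c rule: int_induct[where k = 0])
  case base
  then show ?case using diff_closed[OF \<open>a \<in> S\<close> \<open>a \<in> S\<close>] by simp
next
  case (step1 c)
  have "a * (c + 1) = a * c - (a - a - a)" by algebra
  then show ?case using step1 diff_closed[OF _ diff_closed[OF diff_closed]] \<open>a \<in> S\<close> by metis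
next
  case (step2 c)
  have "a * (c - 1) = a * c - a" by algebra
  then show ?case using step2 diff_closed \<open>a \<in> S\<close> by metis
qed

lemma int_set_eq_multiples:
  fixes S :: "int set"
  assumes diff_closed: "\<And>a b. a \<in> S \<Longrightarrow> b \<in> S \<Longrightarrow> a - b \<in> S"
    and "d \<in> S" "d \<noteq> 0"
  shows "\<exists>r::nat. 0 < r \<and> S = {k. int r dvd k}"
proof -
  have "\<bar>d\<bar> \<in> S"
    using diff_closed_int_set_mult_mem[OF diff_closed \<open>d \<in> S\<close>, of "sgn d"] by (simp only: abs_sgn)
  then have pos_mem: "0 < nat \<bar>d\<bar> \<and> int (nat \<bar>d\<bar>) \<in> S"
    using \<open>d \<noteq> 0\<close> by simp
  define r where "r = (LEAST n::nat. 0 < n \<and> int n \<in> S)"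
  have r: "0 < r" "int r \<in> S"
    using LeastI[of "\<lambda>n. 0 < n \<and> int n \<in> S", OF pos_mem] unfolding r_def by auto
  have r_least: "r \<le> n" if "0 < n" "int n \<in> S" for n
    unfolding r_def using that by (simp add: Least_le)
  have multiples: "int r * c \<in> S" for c
    by (rule diff_closed_int_set_mult_mem[OF diff_closed r(2)])
  have "int r dvd k" if "k \<in> S" for k
  proof (rule ccontr)
    assume "\<not> int r dvd k"
    then have "0 < k mod int r" "k mod int r < int r"
      using r(1) by (simp_all add: order_le_neq_trans dvd_eq_mod_eq_0)
    moreover have "k mod int r \<in> S"
      using diff_closed[OF that multiples[of "k div int r"]] by (simp add: minus_mult_div_eq_mod)
    ultimately show False
      using r_least[of "nat (k mod int r)"] by simp
  qed
  then have "S = {k. int r dvd k}"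
    using multiples by (auto elim!: dvdE)
  then show ?thesis using r(1) by blast
qed

section \<open>The Klein bottle group\<close>

abbreviation KG :: "(int \<times> int) monoid" where
  "KG \<equiv> klein_group"

lemma klein_carrier [simp]: "carrier KG = UNIV"
  and klein_mult [simp]: "(k, m) \<otimes>\<^bsub>KG\<^esub> (l, n) = (k + (if even m then l else - l), m + n)"
  and klein_one [simp]: "\<one>\<^bsub>KG\<^esub> = (0, 0)"
  by (simp_all add: klein_group_def)

lemma klein_group_is_group: "group KG"
proof (rule groupI)
  fix x y z :: "int \<times> int"
  show "x \<otimes>\<^bsub>KG\<^esub> y \<otimes>\<^bsub>KG\<^esub> z = x \<otimes>\<^bsub>KG\<^esub> (y \<otimes>\<^bsub>KG\<^esub> z)"
    by (cases x; cases y; cases z) auto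
  show "\<one>\<^bsub>KG\<^esub> \<otimes>\<^bsub>KG\<^esub> x = x"
    by (cases x) simp
  show "\<exists>y\<in>carrier KG. y \<otimes>\<^bsub>KG\<^esub> x = \<one>\<^bsub>KG\<^esub>"
    by (cases x) (rule bexI[of _ "(if even (snd x) then - fst x else fst x, - snd x)"], auto)
qed auto

interpretation KG: group KG
  by (rule klein_group_is_group)

lemma klein_inv [simp]: "inv\<^bsub>KG\<^esub> (k, m) = (if even m then - k else k, - m)"
  by (rule KG.inv_equality) auto

definition klein_pow_fst :: "int \<Rightarrow> int \<Rightarrow> int \<Rightarrow> int" where
  "klein_pow_fst m t j = (if even m then j * t else if odd j then t else 0)"

lemma klein_pow_fst_0 [simp]: "klein_pow_fst m t 0 = 0"
  by (simp add: klein_pow_fst_def)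

lemma klein_pow_fst_1 [simp]: "klein_pow_fst m t 1 = t"
  by (simp add: klein_pow_fst_def)

lemma klein_pow_fst_add:
  "klein_pow_fst m t (i + j) =
     klein_pow_fst m t i + (if even (m * i) then klein_pow_fst m t j else - klein_pow_fst m t j)"
  by (auto simp: klein_pow_fst_def algebra_simps)

lemma klein_pow_fst_uminus:
  "klein_pow_fst m t (- j) = (if even (m * j) then - klein_pow_fst m t j else klein_pow_fst m t j)"
  by (auto simp: klein_pow_fst_def)

lemma klein_int_pow: "(t, m) [^]\<^bsub>KG\<^esub> (j::int) = (klein_pow_fst m t j, m * j)"
proof (induction j rule: int_induct[where k = 0])
  case base
  then show ?case by simp
next
  case (step1 j)
  have "(t, m) [^]\<^bsub>KG\<^esub> (j + 1) = (t, m) [^]\<^bsub>KG\<^esub> j \<otimes>\<^bsub>KG\<^esub> (t, m)"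
    by (simp add: KG.int_pow_mult)
  then show ?case
    using step1 by (simp add: klein_pow_fst_add distrib_left)
next
  case (step2 j)
  have "(t, m) [^]\<^bsub>KG\<^esub> (j - 1) = (t, m) [^]\<^bsub>KG\<^esub> j \<otimes>\<^bsub>KG\<^esub> inv\<^bsub>KG\<^esub> (t, m)"
    using KG.int_pow_mult[of "(t, m)" j "- 1"] KG.int_pow_neg[of "(t, m)" 1] by simp
  then show ?case
    using step2 klein_pow_fst_add[of m t j "- 1"]
    by (simp add: right_diff_distrib) (auto simp: klein_pow_fst_def)
qed

section \<open>Subgroups of finite index\<close>

text \<open>The subgroup generated by b^r and b^t a^s: its elements are b^(ri) (b^t a^s)^j.\<close>

definition klein_subgroup :: "nat \<Rightarrow> nat \<Rightarrow> int \<Rightarrow> (int \<times> int) set" where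
  "klein_subgroup r s t =
     {(k, m). int s dvd m \<and> int r dvd (k - klein_pow_fst (int s) t (m div int s))}"

lemma klein_subgroup_mem:
  "0 < s \<Longrightarrow> (k, int s * j) \<in> klein_subgroup r s t \<longleftrightarrow> int r dvd (k - klein_pow_fst (int s) t j)"
  by (simp add: klein_subgroup_def)

lemma klein_subgroup_memE:
  assumes "x \<in> klein_subgroup r s t" "0 < s"
  obtains k j where "x = (k, int s * j)" "int r dvd (k - klein_pow_fst (int s) t j)"
  using assms unfolding klein_subgroup_def by (auto elim!: dvdE)

lemma klein_subgroup_fst_mem [simp]: "(k, 0) \<in> klein_subgroup r s t \<longleftrightarrow> int r dvd k"
  by (simp add: klein_subgroup_def)

lemma klein_subgroup_snd_dvd: "x \<in> klein_subgroup r s t \<Longrightarrow> int s dvd snd x"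
  by (auto simp: klein_subgroup_def)

lemma klein_subgroup_is_subgroup:
  assumes s: "0 < s"
  shows "subgroup (klein_subgroup r s t) KG"
proof (rule KG.subgroupI)
  have "(0, 0) \<in> klein_subgroup r s t"
    by simp
  then show "klein_subgroup r s t \<noteq> {}"
    by blast
next
  fix x assume "x \<in> klein_subgroup r s t"
  then obtain k j where x: "x = (k, int s * j)" and k: "int r dvd (k - klein_pow_fst (int s) t j)"
    using klein_subgroup_memE s by blast
  have "(if even (int s * j) then - k else k) - klein_pow_fst (int s) t (- j) =
      (if even (int s * j) then - (k - klein_pow_fst (int s) t j) else k - klein_pow_fst (int s) t j)"
    by (simp add: klein_pow_fst_uminus)
  then have "int r dvd (if even (int s * j) then - k else k) - klein_pow_fst (int s) t (- j)"
    using k by (simp add: dvd_diff_commute)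
  then show "inv\<^bsub>KG\<^esub> x \<in> klein_subgroup r s t"
    using klein_subgroup_mem[OF s, of _ "- j"] x by simp
next
  fix x y assume "x \<in> klein_subgroup r s t" "y \<in> klein_subgroup r s t"
  then obtain k j k' j' where x: "x = (k, int s * j)" and k: "int r dvd (k - klein_pow_fst (int s) t j)"
     and y: "y = (k', int s * j')" and k': "int r dvd (k' - klein_pow_fst (int s) t j')"
    using klein_subgroup_memE s by metis
  have "int r dvd (k - klein_pow_fst (int s) t j) +
      (if even (int s * j) then k' - klein_pow_fst (int s) t j' else - (k' - klein_pow_fst (int s) t j'))"
    using k k' by (simp add: dvd_diff_commute)
  also have "\<dots> = k + (if even (int s * j) then k' else - k') - klein_pow_fst (int s) t (j + j')"
    by (simp add: klein_pow_fst_add)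
  finally have "int r dvd \<dots>" .
  then show "x \<otimes>\<^bsub>KG\<^esub> y \<in> klein_subgroup r s t"
    using klein_subgroup_mem[OF s, of _ "j + j'"] x y by (simp add: distrib_left)
qed simp

lemma klein_subgroup_offset_cong:
  assumes "int r dvd (t - t')"
  shows "klein_subgroup r s t = klein_subgroup r s t'"
proof -
  have "int r dvd (klein_pow_fst m t j - klein_pow_fst m t' j)" for m j
    using assms by (auto simp: klein_pow_fst_def right_diff_distrib[symmetric])
  then have "int r dvd (k - klein_pow_fst m t j) \<longleftrightarrow> int r dvd (k - klein_pow_fst m t' j)" for k m j
    by (metis diff_diff_eq2 dvd_diff dvd_diff_commute diff_add_cancel)
  then show ?thesis
    unfolding klein_subgroup_def by auto
qed

lemma eq_if_dvd_diff_bounded: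
  fixes a b r :: int
  assumes "r dvd (a - b)" "0 \<le> a" "a < r" "0 \<le> b" "b < r"
  shows "a = b"
  using assms by (metis mod_eq_dvd_iff mod_pos_pos_trivial)

lemma klein_subgroup_coset_rep:
  assumes r: "0 < r" and s: "0 < s"
  shows "\<exists>x\<in>{0..<int r} \<times> {0..<int s}. y \<otimes>\<^bsub>KG\<^esub> inv\<^bsub>KG\<^esub> x \<in> klein_subgroup r s t"
proof -
  obtain k m where y: "y = (k, m)" by fastforce
  define q where "q = m div int s"
  define j where "j = m mod int s"
  \<comment> \<open>\<open>e\<close> is the sign with which \<open>i\<close> enters the first coordinate of \<open>y \<otimes> inv (i, j)\<close>;
    \<open>i\<close> is chosen to make that coordinate congruent to \<open>klein_pow_fst (int s) t q\<close> mod r.\<close>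
  define e :: int where "e = (if even m \<longleftrightarrow> even j then -1 else 1)"
  define i where "i = e * (klein_pow_fst (int s) t q - k) mod int r"
  have "int r dvd (i - e * (klein_pow_fst (int s) t q - k))"
    unfolding i_def by (simp add: mod_eq_dvd_iff[symmetric])
  then have "int r dvd e * (i - e * (klein_pow_fst (int s) t q - k))"
    by simp
  moreover have "e * (i - e * (klein_pow_fst (int s) t q - k)) = k + e * i - klein_pow_fst (int s) t q"
    by (auto simp: e_def algebra_simps)
  ultimately have "int r dvd k + e * i - klein_pow_fst (int s) t q"
    by simp
  moreover have "y \<otimes>\<^bsub>KG\<^esub> inv\<^bsub>KG\<^esub> (i, j) = (k + e * i, int s * q)"
    by (auto simp: y e_def q_def j_def minus_mod_eq_mult_div)
  ultimately have "y \<otimes>\<^bsub>KG\<^esub> inv\<^bsub>KG\<^esub> (i, j) \<in> klein_subgroup r s t"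
    using klein_subgroup_mem[OF s] by simp
  moreover have "(i, j) \<in> {0..<int r} \<times> {0..<int s}"
    unfolding i_def j_def using r s by simp
  ultimately show ?thesis
    by blast
qed

lemma klein_subgroup_coset_rep_unique:
  assumes s: "0 < s" and x: "x \<in> {0..<int r} \<times> {0..<int s}" and x': "x' \<in> {0..<int r} \<times> {0..<int s}"
    and "x \<otimes>\<^bsub>KG\<^esub> inv\<^bsub>KG\<^esub> x' \<in> klein_subgroup r s t"
  shows "x = x'"
proof -
  obtain z q where zq: "x \<otimes>\<^bsub>KG\<^esub> inv\<^bsub>KG\<^esub> x' = (z, int s * q)"
    and z: "int r dvd (z - klein_pow_fst (int s) t q)"
    using klein_subgroup_memE[OF _ s] assms(4) by blast
  obtain i j i' j' where ij: "x = (i, j)" "x' = (i', j')"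
    by fastforce
  have "int s dvd j - j'"
    using zq ij by simp
  then have "j = j'"
    using eq_if_dvd_diff_bounded x x' ij by auto
  then have "q = 0" "z = i - i'"
    using zq ij s by (auto split: if_splits)
  then have "int r dvd i - i'"
    using z by simp
  then have "i = i'"
    using eq_if_dvd_diff_bounded x x' ij by auto
  then show "x = x'"
    using ij \<open>j = j'\<close> by simp
qed

lemma klein_subgroup_index:
  assumes "0 < r" "0 < s"
  shows "card (rcosets\<^bsub>KG\<^esub> (klein_subgroup r s t)) = r * s"
proof -
  have "card (rcosets\<^bsub>KG\<^esub> (klein_subgroup r s t)) = card ({0..<int r} \<times> {0..<int s})"
    using klein_subgroup_coset_rep[OF assms] klein_subgroup_coset_rep_unique[OF assms(2)]
    by (intro KG.card_rcosets_eq_card_transversal klein_subgroup_is_subgroup assms) auto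
  then show ?thesis
    by simp
qed

lemma klein_mult_inv_pair:
  "(k, m) \<otimes>\<^bsub>KG\<^esub> inv\<^bsub>KG\<^esub> (l, n) = (k + (if even m \<longleftrightarrow> even n then - l else l), m - n)"
  by simp

lemma finite_index_klein_subgroup_b_exponents:
  assumes H: "subgroup H KG" "finite (rcosets\<^bsub>KG\<^esub> H)"
  shows "\<exists>r>0. \<forall>k. (k, 0) \<in> H \<longleftrightarrow> int r dvd k"
proof -
  let ?S = "{k. (k, 0) \<in> H}"
  have "\<exists>i j. i \<noteq> j \<and> (i, 0) \<otimes>\<^bsub>KG\<^esub> inv\<^bsub>KG\<^esub> (j, 0) \<in> H"
    by (rule KG.finite_rcosets_pigeonhole[OF H]) simp
  then obtain i j where "i \<noteq> j" "(i - j, 0) \<in> H"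
    by (auto simp only: klein_mult_inv_pair) simp
  moreover have "a - b \<in> ?S" if "a \<in> ?S" "b \<in> ?S" for a b
    using subgroup_mult_inv_closed[OF H(1), of "(a, 0)" "(b, 0)"] that by (simp only: klein_mult_inv_pair) simp
  ultimately obtain r where "0 < r" "?S = {k. int r dvd k}"
    using int_set_eq_multiples[of ?S "i - j"] by auto
  then show ?thesis
    by auto
qed

lemma finite_index_klein_subgroup_a_exponents:
  assumes H: "subgroup H KG" "finite (rcosets\<^bsub>KG\<^esub> H)"
  shows "\<exists>s>0. snd ` H = {m. int s dvd m}"
proof -
  have snd_div: "snd (x \<otimes>\<^bsub>KG\<^esub> inv\<^bsub>KG\<^esub> y) = snd x - snd y" for x y
    by (cases x; cases y) (simp only: klein_mult_inv_pair snd_conv)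
  have "\<exists>i j. i \<noteq> j \<and> (0, i) \<otimes>\<^bsub>KG\<^esub> inv\<^bsub>KG\<^esub> (0, j) \<in> H"
    by (rule KG.finite_rcosets_pigeonhole[OF H]) simp
  then obtain i j where "i \<noteq> j" and ij: "(0, i) \<otimes>\<^bsub>KG\<^esub> inv\<^bsub>KG\<^esub> (0, j) \<in> H"
    by blast
  have "i - j \<in> snd ` H"
    using imageI[OF ij, of snd] by (simp only: snd_div snd_conv)
  moreover have "i - j \<noteq> 0"
    using \<open>i \<noteq> j\<close> by simp
  moreover have "a - b \<in> snd ` H" if ab: "a \<in> snd ` H" "b \<in> snd ` H" for a b
  proof -
    obtain x y where "x \<in> H" "y \<in> H" "a = snd x" "b = snd y"
      using ab by blast
    then show ?thesis
      using imageI[OF subgroup_mult_inv_closed[OF H(1) \<open>x \<in> H\<close> \<open>y \<in> H\<close>], of snd] by (simp only: snd_div)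
  qed
  ultimately show ?thesis
    by (intro int_set_eq_multiples[of "snd ` H" "i - j"])
qed

lemma subgroup_eq_klein_subgroup:
  assumes H: "subgroup H KG" and s: "0 < s"
    and b_exps: "\<And>k. (k, 0) \<in> H \<longleftrightarrow> int r dvd k" and a_exps: "snd ` H = {m. int s dvd m}"
    and t: "(t, int s) \<in> H"
  shows "H = klein_subgroup r s t"
proof -
  have powers: "(klein_pow_fst (int s) t j, int s * j) \<in> H" for j
    using KG.subgroup_int_pow_closed[OF H t, of j] by (simp only: klein_int_pow)
  show ?thesis
  proof (intro equalityI subsetI)
    fix x assume "x \<in> H"
    then have "int s dvd snd x"
      using a_exps by blast
    then obtain k j where x: "x = (k, int s * j)"
      by (metis dvdE prod.collapse)
    have "x \<otimes>\<^bsub>KG\<^esub> inv\<^bsub>KG\<^esub> (klein_pow_fst (int s) t j, int s * j) \<in> H"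
      using subgroup_mult_inv_closed[OF H \<open>x \<in> H\<close> powers] .
    then have "(k - klein_pow_fst (int s) t j, 0) \<in> H"
      by (simp only: x klein_mult_inv_pair) simp
    then show "x \<in> klein_subgroup r s t"
      using x b_exps klein_subgroup_mem[OF s] by simp
  next
    fix x assume "x \<in> klein_subgroup r s t"
    then obtain k j where x: "x = (k, int s * j)" and "int r dvd (k - klein_pow_fst (int s) t j)"
      using klein_subgroup_memE[OF _ s] by blast
    then have "(k - klein_pow_fst (int s) t j, 0) \<otimes>\<^bsub>KG\<^esub> (klein_pow_fst (int s) t j, int s * j) \<in> H"
      using subgroup.m_closed[OF H _ powers] b_exps by blast
    then show "x \<in> H"
      using x by simp
  qed
qed

lemma klein_finite_index_subgroup_cases:
  assumes H: "subgroup H KG" "finite (rcosets\<^bsub>KG\<^esub> H)"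
  obtains r s t where "0 < r" "0 < s" "0 \<le> t" "t < int r" "H = klein_subgroup r s t"
proof -
  obtain r where r: "0 < r" "\<And>k. (k, 0) \<in> H \<longleftrightarrow> int r dvd k"
    using finite_index_klein_subgroup_b_exponents[OF H] by blast
  obtain s where s: "0 < s" "snd ` H = {m. int s dvd m}"
    using finite_index_klein_subgroup_a_exponents[OF H] by blast
  have "int s \<in> snd ` H"
    using s(2) by simp
  then obtain t where "(t, int s) \<in> H"
    by force
  then have "H = klein_subgroup r s t"
    using subgroup_eq_klein_subgroup[OF H(1) s(1) r(2) s(2)] by blast
  also have "\<dots> = klein_subgroup r s (t mod int r)"
    by (rule klein_subgroup_offset_cong) (simp add: mod_eq_dvd_iff[symmetric])
  finally show thesis
    using r(1) s(1) by (intro that[of r s "t mod int r"]) simp_all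
qed

lemma klein_subgroup_inject:
  assumes "0 < s" "0 < s'" "0 \<le> t" "t < int r" "0 \<le> t'" "t' < int r'"
    and eq: "klein_subgroup r s t = klein_subgroup r' s' t'"
  shows "r = r' \<and> s = s' \<and> t = t'"
proof -
  have gen: "(t, int s) \<in> klein_subgroup r s t" "(t', int s') \<in> klein_subgroup r' s' t'"
    using klein_subgroup_mem[of s t 1 r t] klein_subgroup_mem[of s' t' 1 r' t'] assms
    by simp_all
  then have "int s' dvd int s" "int s dvd int s'"
    using eq klein_subgroup_snd_dvd by (metis snd_conv)+
  then have s: "s = s'"
    by (simp add: dvd_antisym)
  have "int r' dvd int r"
    using klein_subgroup_fst_mem[of "int r" r s t] unfolding eq by simp
  moreover have "int r dvd int r'"
    using klein_subgroup_fst_mem[of "int r'" r' s' t'] unfolding eq[symmetric] by simp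
  ultimately have r: "r = r'"
    by (simp add: dvd_antisym)
  have "int r dvd (t - t')"
    using gen eq klein_subgroup_mem[of s t 1 r t'] assms s r by simp
  then have "t = t'"
    using eq_if_dvd_diff_bounded assms r by blast
  with r s show ?thesis
    by simp
qed

section \<open>Conjugacy\<close>

definition conj_offset :: "nat \<Rightarrow> int \<times> int \<Rightarrow> int \<Rightarrow> int" where
  "conj_offset s g t =
     (if even s then (if even (snd g) then t else - t)
      else (if even (snd g) then t + 2 * fst g else 2 * fst g - t))"

lemma conj_klein_subgroup_subset:
  assumes s: "0 < s"
  shows "(\<lambda>h. g \<otimes>\<^bsub>KG\<^esub> h \<otimes>\<^bsub>KG\<^esub> inv\<^bsub>KG\<^esub> g) ` klein_subgroup r s t
    \<subseteq> klein_subgroup r s (conj_offset s g t)"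
proof (rule image_subsetI)
  fix h assume "h \<in> klein_subgroup r s t"
  then obtain k j where h: "h = (k, int s * j)" and k: "int r dvd (k - klein_pow_fst (int s) t j)"
    using klein_subgroup_memE[OF _ s] by blast
  obtain p q where g: "g = (p, q)"
    by fastforce
  define y where "y = g \<otimes>\<^bsub>KG\<^esub> h \<otimes>\<^bsub>KG\<^esub> inv\<^bsub>KG\<^esub> g"
  have "snd y = int s * j"
    unfolding y_def g h by simp
  moreover have "fst y - klein_pow_fst (int s) (conj_offset s g t) j =
      (if even q then 1 else - 1) * (k - klein_pow_fst (int s) t j)"
    unfolding y_def g h
    by (cases "even s"; cases "even q"; cases "even j")
      (auto simp: klein_pow_fst_def conj_offset_def algebra_simps)
  ultimately have "y \<in> klein_subgroup r s (conj_offset s g t)"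
    using k klein_subgroup_mem[OF s, of "fst y" j r] by (metis dvd_mult prod.collapse)
  then show "g \<otimes>\<^bsub>KG\<^esub> h \<otimes>\<^bsub>KG\<^esub> inv\<^bsub>KG\<^esub> g \<in> klein_subgroup r s (conj_offset s g t)"
    by (simp only: y_def)
qed

lemma conj_offset_inv: "conj_offset s (inv\<^bsub>KG\<^esub> g) (conj_offset s g t) = t"
  by (cases g) (auto simp: conj_offset_def)

lemma conj_klein_subgroup:
  assumes s: "0 < s"
  shows "(\<lambda>h. g \<otimes>\<^bsub>KG\<^esub> h \<otimes>\<^bsub>KG\<^esub> inv\<^bsub>KG\<^esub> g) ` klein_subgroup r s t = klein_subgroup r s (conj_offset s g t)"
proof
  show "(\<lambda>h. g \<otimes>\<^bsub>KG\<^esub> h \<otimes>\<^bsub>KG\<^esub> inv\<^bsub>KG\<^esub> g) ` klein_subgroup r s t \<subseteq> klein_subgroup r s (conj_offset s g t)"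
    by (rule conj_klein_subgroup_subset[OF s])
  show "klein_subgroup r s (conj_offset s g t) \<subseteq> (\<lambda>h. g \<otimes>\<^bsub>KG\<^esub> h \<otimes>\<^bsub>KG\<^esub> inv\<^bsub>KG\<^esub> g) ` klein_subgroup r s t"
  proof
    fix y assume "y \<in> klein_subgroup r s (conj_offset s g t)"
    then have "inv\<^bsub>KG\<^esub> g \<otimes>\<^bsub>KG\<^esub> y \<otimes>\<^bsub>KG\<^esub> inv\<^bsub>KG\<^esub> (inv\<^bsub>KG\<^esub> g) \<in> klein_subgroup r s t"
      using conj_klein_subgroup_subset[OF s, of "inv\<^bsub>KG\<^esub> g" r "conj_offset s g t"]
      by (auto simp only: conj_offset_inv)
    moreover have "y = g \<otimes>\<^bsub>KG\<^esub> (inv\<^bsub>KG\<^esub> g \<otimes>\<^bsub>KG\<^esub> y \<otimes>\<^bsub>KG\<^esub> inv\<^bsub>KG\<^esub> (inv\<^bsub>KG\<^esub> g)) \<otimes>\<^bsub>KG\<^esub> inv\<^bsub>KG\<^esub> g"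
      by (cases g; cases y) auto
    ultimately show "y \<in> (\<lambda>h. g \<otimes>\<^bsub>KG\<^esub> h \<otimes>\<^bsub>KG\<^esub> inv\<^bsub>KG\<^esub> g) ` klein_subgroup r s t"
      by blast
  qed
qed

text \<open>The least element of the orbit of t in [0, r) under t \<mapsto> -t and, for odd s,
  t \<mapsto> t + 2p, all taken modulo r.\<close>

definition offset_class_rep :: "nat \<Rightarrow> nat \<Rightarrow> int \<Rightarrow> int" where
  "offset_class_rep r s t =
     (if even s then min t ((- t) mod int r) else t mod (if even r then 2 else 1))"

lemma uminus_mod_in_range:
  "0 \<le> t \<Longrightarrow> t < int r \<Longrightarrow> (- t) mod int r = (if t = 0 then 0 else int r - t)"
  by (simp add: zmod_zminus1_eq_if)

lemma offset_class_rep_conj_offset: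
  assumes "0 \<le> t" "t < int r"
  shows "offset_class_rep r s (conj_offset s g t mod int r) = offset_class_rep r s t"
proof (cases "even s")
  case True
  have "(- ((- t) mod int r)) mod int r = t"
    by (metis mod_minus_eq minus_minus mod_pos_pos_trivial assms)
  then show ?thesis
    using True assms by (auto simp: conj_offset_def offset_class_rep_def min.commute)
next
  case False
  have "(2 * p - t) mod 2 = t mod 2" for p :: int
    by presburger
  moreover have "(x mod int r) mod 2 = x mod 2" if "even r" for x
    using that by (metis even_of_nat mod_mod_cancel)
  ultimately show ?thesis
    using False by (auto simp: conj_offset_def offset_class_rep_def)
qed

lemma same_offset_class_rep_imp_conj_offset:
  assumes t: "0 \<le> t" "t < int r" and t': "0 \<le> t'" "t' < int r"
    and rep: "offset_class_rep r s t = offset_class_rep r s t'"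
  shows "\<exists>g. int r dvd (conj_offset s g t - t')"
proof (cases "even s")
  case True
  then have "t = t' \<or> t + t' = int r"
    using rep uminus_mod_in_range[OF t] uminus_mod_in_range[OF t']
    by (auto simp: offset_class_rep_def min_def split: if_splits)
  then show ?thesis
  proof
    assume "t = t'"
    then show ?thesis
      using True by (intro exI[of _ "(0, 0)"]) (simp add: conj_offset_def)
  next
    assume "t + t' = int r"
    then have "- t - t' = - int r"
      by simp
    then show ?thesis
      using True by (intro exI[of _ "(0, 1)"]) (simp add: conj_offset_def)
  qed
next
  case odd_s: False
  show ?thesis
  proof (cases "even r")
    case True
    then have "even (t' - t)"
      using rep odd_s by (simp add: offset_class_rep_def mod_eq_dvd_iff[symmetric] dvd_diff_commute)
    then show ?thesis
      using odd_s by (intro exI[of _ "((t' - t) div 2, 0)"]) (simp add: conj_offset_def)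
  next
    case False
    then have "2 * ((int r + 1) div 2) = int r + 1"
      by presburger
    then have "t + 2 * ((t' - t) * ((int r + 1) div 2)) - t' = (t' - t) * int r"
      by (simp add: algebra_simps)
    then show ?thesis
      using odd_s by (intro exI[of _ "((t' - t) * ((int r + 1) div 2), 0)"]) (simp add: conj_offset_def)
  qed
qed

lemma conjugate_klein_subgroups_iff:
  assumes "0 < s" "0 < s'" "r * s = r' * s'"
    and t: "0 \<le> t" "t < int r" and t': "0 \<le> t'" "t' < int r'"
  shows "conjugate_subgroups KG (klein_subgroup r s t) (klein_subgroup r' s' t') \<longleftrightarrow>
    r = r' \<and> offset_class_rep r s t = offset_class_rep r' s' t'"
proof
  assume "conjugate_subgroups KG (klein_subgroup r s t) (klein_subgroup r' s' t')"
  then obtain g where "klein_subgroup r' s' t' = (\<lambda>h. g \<otimes>\<^bsub>KG\<^esub> h \<otimes>\<^bsub>KG\<^esub> inv\<^bsub>KG\<^esub> g) ` klein_subgroup r s t"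
    unfolding conjugate_subgroups_def by blast
  also have "\<dots> = klein_subgroup r s (conj_offset s g t)"
    by (rule conj_klein_subgroup[OF \<open>0 < s\<close>])
  also have "\<dots> = klein_subgroup r s (conj_offset s g t mod int r)"
    by (rule klein_subgroup_offset_cong) (simp add: mod_eq_dvd_iff[symmetric])
  finally have eq: "klein_subgroup r' s' t' = klein_subgroup r s (conj_offset s g t mod int r)" .
  have "0 \<le> conj_offset s g t mod int r" "conj_offset s g t mod int r < int r"
    using t by simp_all
  then have "r' = r \<and> s' = s \<and> t' = conj_offset s g t mod int r"
    using klein_subgroup_inject[OF \<open>0 < s'\<close> \<open>0 < s\<close> t' _ _ eq] by blast
  then show "r = r' \<and> offset_class_rep r s t = offset_class_rep r' s' t'"
    using offset_class_rep_conj_offset[OF t] by simp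
next
  assume "r = r' \<and> offset_class_rep r s t = offset_class_rep r' s' t'"
  then have r: "r' = r" and s: "s' = s" and rep: "offset_class_rep r s t = offset_class_rep r s t'"
    using assms by auto
  obtain g where "int r dvd (conj_offset s g t - t')"
    using same_offset_class_rep_imp_conj_offset[OF t t'[unfolded r] rep] by blast
  then have "klein_subgroup r' s' t' = klein_subgroup r s (conj_offset s g t)"
    unfolding r s by (rule klein_subgroup_offset_cong[symmetric])
  also have "\<dots> = (\<lambda>h. g \<otimes>\<^bsub>KG\<^esub> h \<otimes>\<^bsub>KG\<^esub> inv\<^bsub>KG\<^esub> g) ` klein_subgroup r s t"
    by (rule conj_klein_subgroup[OF \<open>0 < s\<close>, symmetric])
  finally show "conjugate_subgroups KG (klein_subgroup r s t) (klein_subgroup r' s' t')"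
    unfolding conjugate_subgroups_def klein_carrier by blast
qed

section \<open>Counting the classes\<close>

lemma card_quotient_eq_card_invariant:
  assumes A: "A = f ` P"
    and R: "\<And>p q. p \<in> P \<Longrightarrow> q \<in> P \<Longrightarrow> (f p, f q) \<in> R \<longleftrightarrow> g p = g q"
    and closed: "\<And>x y. x \<in> A \<Longrightarrow> (x, y) \<in> R \<Longrightarrow> y \<in> A"
  shows "card (A // R) = card (g ` P)"
proof -
  define cls where "cls v = f ` {q\<in>P. g q = v}" for v
  have class_eq: "R `` {f p} = cls (g p)" if p: "p \<in> P" for p
  proof
    show "R `` {f p} \<subseteq> cls (g p)"
    proof
      fix y assume "y \<in> R `` {f p}"
      then have y: "(f p, y) \<in> R" by blast
      then obtain q where q: "q \<in> P" "y = f q"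
        using closed p A by blast
      then show "y \<in> cls (g p)"
        using R[OF p q(1)] y unfolding cls_def by auto
    qed
    show "cls (g p) \<subseteq> R `` {f p}"
      unfolding cls_def using R[OF p] p by auto
  qed
  have "A // R = cls ` (g ` P)"
    unfolding quotient_def A using class_eq by auto
  moreover have "inj_on cls (g ` P)"
  proof (rule inj_onI)
    fix v w assume "v \<in> g ` P" "w \<in> g ` P" "cls v = cls w"
    then obtain p q where "p \<in> P" "q \<in> P" "v = g p" "w = g q" "f p \<in> cls (g q)"
      unfolding cls_def by force
    then obtain q' where "q' \<in> P" "g q' = g q" "f p = f q'"
      unfolding cls_def by auto
    then show "v = w"
      using R[OF \<open>p \<in> P\<close> \<open>q' \<in> P\<close>] R[OF \<open>q' \<in> P\<close> \<open>q' \<in> P\<close>] \<open>v = g p\<close> \<open>w = g q\<close> by simp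
  qed
  ultimately show ?thesis
    by (simp add: card_image)
qed

definition klein_params :: "nat \<Rightarrow> (nat \<times> nat \<times> int) set" where
  "klein_params n = {(r, s, t). r * s = n \<and> 0 \<le> t \<and> t < int r}"

lemma subgroups_of_index_klein:
  assumes "1 \<le> n"
  shows "subgroups_of_index KG n = (\<lambda>(r, s, t). klein_subgroup r s t) ` klein_params n"
proof (intro equalityI subsetI)
  fix H assume "H \<in> subgroups_of_index KG n"
  then have H: "subgroup H KG" and index: "card (rcosets\<^bsub>KG\<^esub> H) = n"
    unfolding subgroups_of_index_def by auto
  then have "finite (rcosets\<^bsub>KG\<^esub> H)"
    using assms card.infinite by fastforce
  then obtain r s t where rst: "0 < r" "0 < s" "0 \<le> t" "t < int r" "H = klein_subgroup r s t"
    using klein_finite_index_subgroup_cases[OF H] by blast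
  then have "r * s = n"
    using klein_subgroup_index index by simp
  then show "H \<in> (\<lambda>(r, s, t). klein_subgroup r s t) ` klein_params n"
    unfolding klein_params_def using rst by (auto intro!: image_eqI[of _ _ "(r, s, t)"])
next
  fix H assume "H \<in> (\<lambda>(r, s, t). klein_subgroup r s t) ` klein_params n"
  then obtain r s t where rst: "r * s = n" "H = klein_subgroup r s t"
    unfolding klein_params_def by auto
  then have "0 < r" "0 < s"
    using assms by auto
  then show "H \<in> subgroups_of_index KG n"
    unfolding subgroups_of_index_def
    using rst klein_subgroup_is_subgroup klein_subgroup_index by auto
qed

definition num_offset_classes :: "nat \<Rightarrow> nat \<Rightarrow> nat" where
  "num_offset_classes r s = (if even s then r div 2 + 1 else if even r then 2 else 1)"

lemma offset_class_reps_even: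
  assumes "0 < r" "even s"
  shows "offset_class_rep r s ` {0..<int r} = {0..int r div 2}"
proof (intro equalityI subsetI)
  fix c assume "c \<in> offset_class_rep r s ` {0..<int r}"
  then obtain t where "0 \<le> t" "t < int r" "c = min t ((- t) mod int r)"
    using assms(2) unfolding offset_class_rep_def by auto
  then show "c \<in> {0..int r div 2}"
    using uminus_mod_in_range[of t r] by (auto simp: min_def)
next
  fix c assume c: "c \<in> {0..int r div 2}"
  then have "0 \<le> c" "c < int r"
    using assms(1) by auto
  moreover have "offset_class_rep r s c = c"
    using assms(2) uminus_mod_in_range[OF calculation] c by (auto simp: offset_class_rep_def min_def)
  ultimately show "c \<in> offset_class_rep r s ` {0..<int r}"
    by force
qed

lemma offset_class_reps_odd:
  assumes "0 < r" "odd s"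
  shows "offset_class_rep r s ` {0..<int r} = {0..<(if even r then 2 else 1)}"
proof -
  define m :: int where "m = (if even r then 2 else 1)"
  have m: "0 < m" "m \<le> int r"
    unfolding m_def using assms(1) by (auto elim!: evenE)
  have "offset_class_rep r s ` {0..<int r} = {0..<m}"
  proof (intro equalityI subsetI)
    fix c assume "c \<in> offset_class_rep r s ` {0..<int r}"
    then show "c \<in> {0..<m}"
      using assms(2) m unfolding offset_class_rep_def m_def[symmetric] by auto
  next
    fix c assume c: "c \<in> {0..<m}"
    then have "offset_class_rep r s c = c"
      using assms(2) unfolding offset_class_rep_def m_def[symmetric] by auto
    then show "c \<in> offset_class_rep r s ` {0..<int r}"
      using c m by force
  qed
  then show ?thesis
    by (simp add: m_def)
qed

lemma card_offset_class_reps: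
  assumes "0 < r"
  shows "card (offset_class_rep r s ` {0..<int r}) = num_offset_classes r s"
  using offset_class_reps_even[OF assms] offset_class_reps_odd[OF assms]
  by (cases "even s") (simp_all add: num_offset_classes_def)

lemma card_offset_class_invariants:
  assumes "1 \<le> n"
  shows "card ((\<lambda>(r, s, t). (r, offset_class_rep r s t)) ` klein_params n) =
    (\<Sum>r | r dvd n. num_offset_classes r (n div r))"
proof -
  have "(\<lambda>(r, s, t). (r, offset_class_rep r s t)) ` klein_params n =
      Sigma {r. r dvd n} (\<lambda>r. offset_class_rep r (n div r) ` {0..<int r})"
  proof (intro equalityI subsetI)
    fix x assume "x \<in> (\<lambda>(r, s, t). (r, offset_class_rep r s t)) ` klein_params n"
    then show "x \<in> Sigma {r. r dvd n} (\<lambda>r. offset_class_rep r (n div r) ` {0..<int r})"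
      unfolding klein_params_def using assms by auto
  next
    fix x assume "x \<in> Sigma {r. r dvd n} (\<lambda>r. offset_class_rep r (n div r) ` {0..<int r})"
    then obtain r t where x: "x = (r, offset_class_rep r (n div r) t)" "r dvd n" "0 \<le> t" "t < int r"
      by auto
    then have "(r, n div r, t) \<in> klein_params n"
      unfolding klein_params_def by auto
    then show "x \<in> (\<lambda>(r, s, t). (r, offset_class_rep r s t)) ` klein_params n"
      using x by force
  qed
  also have "card \<dots> = (\<Sum>r | r dvd n. card (offset_class_rep r (n div r) ` {0..<int r}))"
    using assms by (intro card_SigmaI) auto
  also have "\<dots> = (\<Sum>r | r dvd n. num_offset_classes r (n div r))"
    using assms by (intro sum.cong card_offset_class_reps) (auto intro: gr0I)
  finally show ?thesis .
qed

lemma klein_params_memD: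
  "(r, s, t) \<in> klein_params n \<Longrightarrow> 1 \<le> n \<Longrightarrow> 0 < r \<and> 0 < s \<and> r * s = n \<and> 0 \<le> t \<and> t < int r"
  by (auto simp: klein_params_def)

lemma subgroups_of_index_klein_conj_closed:
  assumes n: "1 \<le> n" and H: "H \<in> subgroups_of_index KG n" and HK: "conjugate_subgroups KG H K"
  shows "K \<in> subgroups_of_index KG n"
proof -
  obtain r s t where rst: "(r, s, t) \<in> klein_params n" and H_eq: "H = klein_subgroup r s t"
    using H unfolding subgroups_of_index_klein[OF n] by auto
  obtain g where "K = (\<lambda>h. g \<otimes>\<^bsub>KG\<^esub> h \<otimes>\<^bsub>KG\<^esub> inv\<^bsub>KG\<^esub> g) ` H"
    using HK unfolding conjugate_subgroups_def by auto
  also have "\<dots> = klein_subgroup r s (conj_offset s g t)"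
    using conj_klein_subgroup klein_params_memD[OF rst n] H_eq by simp
  also have "\<dots> = klein_subgroup r s (conj_offset s g t mod int r)"
    by (rule klein_subgroup_offset_cong) (simp add: mod_eq_dvd_iff[symmetric])
  finally have "K = \<dots>" .
  moreover have "(r, s, conj_offset s g t mod int r) \<in> klein_params n"
    using klein_params_memD[OF rst n] by (simp add: klein_params_def)
  ultimately show ?thesis
    unfolding subgroups_of_index_klein[OF n] by force
qed

lemma num_conj_classes_klein:
  assumes n: "1 \<le> n"
  shows "num_conj_classes_index KG n = (\<Sum>r | r dvd n. num_offset_classes r (n div r))"
proof -
  let ?f = "\<lambda>(r, s, t). klein_subgroup r s t"
  let ?g = "\<lambda>(r, s, t). (r, offset_class_rep r s t)"
  have "(?f p, ?f q) \<in> {(H, K). conjugate_subgroups KG H K} \<longleftrightarrow> ?g p = ?g q"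
    if p: "p \<in> klein_params n" and q: "q \<in> klein_params n" for p q
  proof -
    obtain r s t r' s' t' where "p = (r, s, t)" "q = (r', s', t')"
      by (cases p; cases q) blast
    with klein_params_memD[of _ _ _ n] p q n show ?thesis
      using conjugate_klein_subgroups_iff[of s s' r r' t t'] by simp
  qed
  then have "num_conj_classes_index KG n = card (?g ` klein_params n)"
    unfolding num_conj_classes_index_def
    using subgroups_of_index_klein_conj_closed[OF n]
    by (intro card_quotient_eq_card_invariant[OF subgroups_of_index_klein[OF n]]) auto
  then show ?thesis
    using card_offset_class_invariants[OF n] by simp
qed

lemma sum_divisors_swap:
  fixes n :: nat
  assumes "0 < n"
  shows "(\<Sum>r | r dvd n. f r (n div r)) = (\<Sum>r | r dvd n. f (n div r) r)"
  by (rule sum.reindex_bij_witness[where i = "\<lambda>r. n div r" and j = "\<lambda>r. n div r"])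
    (use assms in \<open>auto simp: div_div_eq_right dvd_div_iff_mult\<close>)

lemma sum_divisors_double:
  fixes n :: nat
  assumes "0 < n"
  shows "(\<Sum>r | r dvd n \<and> even (n div r). f (2 * r)) = (\<Sum>d | d dvd n \<and> even d. f d)"
  by (rule sum.reindex_bij_witness[where i = "\<lambda>d. d div 2" and j = "\<lambda>r. 2 * r"])
    (use assms in \<open>auto simp: dvd_div_iff_mult elim!: evenE dvdE\<close>)

lemma klein_a_seq_double: "klein_a_seq (2 * r) = r div 2 + 1 + (if odd r then 1 else 0)"
proof (cases "even r")
  case True
  then obtain k where "r = 2 * k"
    by blast
  then show ?thesis
    by (simp add: klein_a_seq_def)
next
  case False
  then obtain k where "r = 2 * k + 1"
    using oddE by blast
  moreover have "(4 * k + 2) mod 4 = 2"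
    by presburger
  ultimately show ?thesis
    by (simp add: klein_a_seq_def)
qed

lemma sum_num_offset_classes:
  fixes n :: nat
  assumes n: "0 < n"
  shows "(\<Sum>r | r dvd n. num_offset_classes r (n div r)) = (\<Sum>d | d dvd n. klein_a_seq d)"
proof -
  let ?D = "{r. r dvd n}"
  have fin: "finite ?D"
    using n by simp
  have "(\<Sum>r\<in>?D. num_offset_classes r (n div r)) =
      (\<Sum>r\<in>?D. if even (n div r) then r div 2 + 1 else 0) +
      (\<Sum>r\<in>?D. if odd (n div r) then (if even r then 2 else 1) else 0)"
    unfolding sum.distrib[symmetric] by (intro sum.cong) (auto simp: num_offset_classes_def)
  also have "(\<Sum>r\<in>?D. if odd (n div r) then (if even r then 2 else 1) else 0) =
      (\<Sum>r\<in>?D. if odd r then (if even (n div r) then 2 else 1) else 0)"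
    using sum_divisors_swap[OF n, of "\<lambda>r s. if odd s then (if even r then 2 else 1) else 0"] by simp
  also have "(\<Sum>r\<in>?D. if even (n div r) then r div 2 + 1 else 0) + \<dots> =
      (\<Sum>r\<in>?D. if even (n div r) then klein_a_seq (2 * r) else 0) + (\<Sum>d\<in>?D. if odd d then 1 else 0)"
    unfolding sum.distrib[symmetric] by (intro sum.cong) (auto simp: klein_a_seq_double)
  also have "(\<Sum>r\<in>?D. if even (n div r) then klein_a_seq (2 * r) else 0) =
      (\<Sum>d\<in>?D. if even d then klein_a_seq d else 0)"
    using sum_divisors_double[OF n, of klein_a_seq] by (simp add: sum.inter_filter[OF fin, symmetric])
  also have "(\<Sum>d\<in>?D. if odd d then 1 else 0) = (\<Sum>d\<in>?D. if odd d then klein_a_seq d else 0)"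
    by (intro sum.cong) (auto simp: klein_a_seq_def)
  also have "(\<Sum>d\<in>?D. if even d then klein_a_seq d else 0) + \<dots> = (\<Sum>d\<in>?D. klein_a_seq d)"
    unfolding sum.distrib[symmetric] by (intro sum.cong) auto
  finally show ?thesis .
qed

theorem proposition9p8:
  fixes n :: nat
  assumes "n \<ge> 1"
  shows "num_conj_classes_index klein_group n = (\<Sum>d | d dvd n. klein_a_seq d)"
  using num_conj_classes_klein[OF assms] sum_num_offset_classes assms by simp

end
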